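(* Fix $p\in(0,1)$ and $\varepsilon\in(0,1)$. Consider oracular search among $N$ items (marked element uniformly random) by algorithms of the following ("exclusion round") class, which may depend on $p$. The algorithm proceeds in rounds $g=0,1,\ldots,r$; before round $g$, $g$ previously tested items have been excluded, and round $g$ operates on a quantum register $\mathbb{C}^{N-g}\otimes\mathbb{C}^M$ (the first factor spanned by the non-excluded items) subject to partial depolarizing noise $D_p(\varrho)=p\frac{I_d}{d}\mathrm{Tr}(\varrho)+(1-p)\varrho$ ($d$ the register dimension): it prepares $\varrho^x=T_{k_g}'\widehat{O}_xT_{k_g}D_p\cdots D_pT_1'\widehat{O}_xT_1D_p(\varrho_0)$ using $k_g$ oracle calls $\widehat{O}_x(|y\rangle\langle y'|\otimes\sigma)=(-1)^{\delta_{xy}+\delta_{xy'}}|y\rangle\langle y'|\otimes\sigma$ (arbitrary initial state and $x$-independent channels), measures a POVM to obtain a guess among the non-excluded items, verifies it with one further noiseless oracle query (storing it if correct), and otherwise excludes it. It is assumed that failure probabilities are multiplicative: the overall failure probability equals $\prod_{g=0}^r(1-p_s^{(g)})$, where $p_s^{(g)}$ is round $g$'s success probability averaged over the marked element uniformly distributed among the $N-g$ non-excluded items. The number of queries is $q_N=\sum_{g=0}^r(k_g+1)$. For each $N$ let such an algorithm find the marked element except with failure probability at most $\varepsilon$, using $q_N$ queries. Then there is a sequence $C_N=C_N(\varepsilon,p)$ with $\lim_{N\to\infty}C_N=1$ such that $$q_N\ge\frac{N}{1+\frac{8C_N}{p\log(1/\varepsilon)}}.$$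
   Context: $\log$ is the natural logarithm. Noise $D_p$ is applied once between consecutive oracle invocations as in the displayed formula; channels are completely positive trace-preserving maps. *)

theory Defs
  imports Complex_Main "Jordan_Normal_Form.Matrix"
begin

type_synonym cmat = "complex mat"

definition mtr :: "cmat \<Rightarrow> complex" where
  "mtr A = (\<Sum>i<dim_row A. A $$ (i, i))"

definition madj :: "cmat \<Rightarrow> cmat" where
  "madj A = mat (dim_col A) (dim_row A) (\<lambda>(i, j). cnj (A $$ (j, i)))"

definition msum :: "nat \<Rightarrow> nat \<Rightarrow> (nat \<Rightarrow> cmat) \<Rightarrow> cmat" where
  "msum d n F = mat d d (\<lambda>(i, j). \<Sum>y<n. F y $$ (i, j))"

definition psd :: "nat \<Rightarrow> cmat \<Rightarrow> bool" where
  "psd d A \<longleftrightarrow> A \<in> carrier_mat d d \<and> madj A = A \<and>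
     (\<forall>v \<in> carrier_vec d. 0 \<le> Re (\<Sum>i<d. cnj (v $ i) * (A *\<^sub>v v) $ i))"

definition density :: "nat \<Rightarrow> cmat \<Rightarrow> bool" where
  "density d \<rho> \<longleftrightarrow> psd d \<rho> \<and> mtr \<rho> = 1"

definition cptp :: "nat \<Rightarrow> (cmat \<Rightarrow> cmat) \<Rightarrow> bool" where
  "cptp d T \<longleftrightarrow> (\<exists>(m::nat) (K::nat \<Rightarrow> cmat).
      (\<forall>i<m. K i \<in> carrier_mat d d) \<and>
      msum d m (\<lambda>i. madj (K i) * K i) = 1\<^sub>m d \<and>
      (\<forall>\<rho> \<in> carrier_mat d d. T \<rho> = msum d m (\<lambda>i. K i * \<rho> * madj (K i))))"

definition povm :: "nat \<Rightarrow> nat \<Rightarrow> (nat \<Rightarrow> cmat) \<Rightarrow> bool" where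
  "povm d n E \<longleftrightarrow> (\<forall>y<n. psd d (E y)) \<and> msum d n E = 1\<^sub>m d"

definition depol :: "real \<Rightarrow> nat \<Rightarrow> cmat \<Rightarrow> cmat" where
  "depol p d \<rho> = (complex_of_real p * mtr \<rho> / of_nat d) \<cdot>\<^sub>m 1\<^sub>m d
                  + complex_of_real (1 - p) \<cdot>\<^sub>m \<rho>"

text \<open>Query channel on C^n \<otimes> C^M (basis |y>|m> has index y*M+m):
  |y><y'| \<otimes> sigma \<mapsto> (-1)^(\<delta>_xy + \<delta>_xy') |y><y'| \<otimes> sigma.\<close>
definition query_op :: "nat \<Rightarrow> nat \<Rightarrow> nat \<Rightarrow> cmat \<Rightarrow> cmat" where
  "query_op n M x \<rho> = mat (n * M) (n * M)
     (\<lambda>(i, j). (if i div M = x then -1 else 1) * (if j div M = x then -1 else 1) * \<rho> $$ (i, j))"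

text \<open>One round: k queries, initial state, channels T_i, T'_i (i = 1..k),
  and a POVM E with one outcome per non-excluded item.\<close>
record round =
  rk :: nat
  rinit :: cmat
  rT :: "nat \<Rightarrow> cmat \<Rightarrow> cmat"
  rT' :: "nat \<Rightarrow> cmat \<Rightarrow> cmat"
  rE :: "nat \<Rightarrow> cmat"

fun evolve :: "real \<Rightarrow> nat \<Rightarrow> nat \<Rightarrow> round \<Rightarrow> nat \<Rightarrow> nat \<Rightarrow> cmat \<Rightarrow> cmat" where
  "evolve p n M R x 0 \<rho> = \<rho>"
| "evolve p n M R x (Suc i) \<rho> =
     rT' R (Suc i) (query_op n M x (rT R (Suc i) (depol p (n * M) (evolve p n M R x i \<rho>))))"

definition round_state :: "real \<Rightarrow> nat \<Rightarrow> nat \<Rightarrow> round \<Rightarrow> nat \<Rightarrow> cmat" where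
  "round_state p n M R x = evolve p n M R x (rk R) (rinit R)"

definition valid_round :: "nat \<Rightarrow> nat \<Rightarrow> round \<Rightarrow> bool" where
  "valid_round n M R \<longleftrightarrow> density (n * M) (rinit R) \<and>
     (\<forall>i \<in> {1..rk R}. cptp (n * M) (rT R i) \<and> cptp (n * M) (rT' R i)) \<and>
     povm (n * M) n (rE R)"

definition round_success :: "real \<Rightarrow> nat \<Rightarrow> nat \<Rightarrow> round \<Rightarrow> real" where
  "round_success p n M R = (1 / real n) * (\<Sum>x<n. Re (mtr (rE R x * round_state p n M R x)))"

record alg =
  arounds :: nat
  aM :: nat
  around :: "nat \<Rightarrow> round"

definition valid_alg :: "nat \<Rightarrow> alg \<Rightarrow> bool" where
  "valid_alg N A \<longleftrightarrow> arounds A < N \<and> 1 \<le> aM A \<and>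
     (\<forall>g \<le> arounds A. valid_round (N - g) (aM A) (around A g))"

definition failure_prob :: "real \<Rightarrow> nat \<Rightarrow> alg \<Rightarrow> real" where
  "failure_prob p N A = (\<Prod>g \<le> arounds A. 1 - round_success p (N - g) (aM A) (around A g))"

definition queries :: "alg \<Rightarrow> nat" where
  "queries A = (\<Sum>g \<le> arounds A. rk (around A g) + 1)"

end

theory Submission
  imports Defs
begin

(* Each round is compared with its oracle-free twin. Writing the initial state as an ensemble of
   vectors and every channel through its Kraus operators, both evolutions run on the same
   branches, and the squared distance D between the two ensembles, summed over the marked item,
   obeys D' <= (1 + t) (1 - p) D + 4 (1 + 1/t) per query: depolarizing shrinks it by 1 - p, the
   x-independent channels preserve it, and a query only moves the part of the free ensemble lying
   on the block of x. Hence D <= 4 k / p and D <= 16 / p^2, and comparing the POVM statistics of the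
   two ensembles bounds the success probability of a round with k queries on n items by
   min (1 + 8 k / p, (1 + 4 / p)^2) / n. Multiplicativity gives ln (1 / eps) <= sum of
   -ln (1 - p_s^(g)); once the q queries leave N - q items, every p_s^(g) is O(1/N), so
   -ln (1 - x) <= C_N x and ln (1 / eps) <= C_N (8 / p) q / (N - q), which rearranges to the claim. *)

section \<open>Vectors and sesquilinear forms\<close>

text \<open>Vectors of \<open>\<complex>\<^sup>d\<close> are functions \<open>nat \<Rightarrow> complex\<close> of which only the first \<open>d\<close>
  values matter.\<close>

definition sesq :: "nat \<Rightarrow> cmat \<Rightarrow> (nat \<Rightarrow> complex) \<Rightarrow> (nat \<Rightarrow> complex) \<Rightarrow> complex" where
  "sesq d A u v = (\<Sum>i<d. \<Sum>j<d. cnj (u i) * A $$ (i, j) * v j)"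

definition sqnorm :: "nat \<Rightarrow> (nat \<Rightarrow> complex) \<Rightarrow> real" where
  "sqnorm d u = (\<Sum>i<d. (cmod (u i))\<^sup>2)"

definition mat_apply :: "nat \<Rightarrow> cmat \<Rightarrow> (nat \<Rightarrow> complex) \<Rightarrow> nat \<Rightarrow> complex" where
  "mat_apply d A u = (\<lambda>i. \<Sum>j<d. A $$ (i, j) * u j)"

definition hermitian :: "nat \<Rightarrow> cmat \<Rightarrow> bool" where
  "hermitian d A \<longleftrightarrow> (\<forall>i<d. \<forall>j<d. A $$ (i, j) = cnj (A $$ (j, i)))"

lemma sum_list_concat_map: "(\<Sum>u\<leftarrow>concat xss. f u) = (\<Sum>xs\<leftarrow>xss. \<Sum>u\<leftarrow>xs. f u)"
  by (induct xss) auto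

lemma sum_list_upt_eq_sum: "(\<Sum>a\<leftarrow>[0..<m]. f a) = (\<Sum>a<m. f a)"
  by (simp add: interv_sum_list_conv_sum_set_nat atLeast0LessThan)

lemma sum_list_sum_swap: "(\<Sum>u\<leftarrow>L. \<Sum>k\<in>A. f u k) = (\<Sum>k\<in>A. \<Sum>u\<leftarrow>L. f u k)"
  by (induct L) (auto simp: sum.distrib)

lemma Re_sum_list: "Re (\<Sum>u\<leftarrow>L. f u) = (\<Sum>u\<leftarrow>L. Re (f u))"
  by (induct L) auto

lemma sum_reverse4:
  "(\<Sum>i\<in>A. \<Sum>j\<in>B. \<Sum>l\<in>D. \<Sum>k\<in>C. f i j k l) = (\<Sum>k\<in>C. \<Sum>l\<in>D. \<Sum>j\<in>B. \<Sum>i\<in>A. f i j k l)"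
proof -
  have "(\<Sum>i\<in>A. \<Sum>j\<in>B. \<Sum>l\<in>D. \<Sum>k\<in>C. f i j k l) = (\<Sum>i\<in>A. \<Sum>j\<in>B. \<Sum>k\<in>C. \<Sum>l\<in>D. f i j k l)"
    by (intro sum.cong refl sum.swap)
  also have "\<dots> = (\<Sum>i\<in>A. \<Sum>k\<in>C. \<Sum>j\<in>B. \<Sum>l\<in>D. f i j k l)"
    by (intro sum.cong refl sum.swap)
  also have "\<dots> = (\<Sum>k\<in>C. \<Sum>i\<in>A. \<Sum>j\<in>B. \<Sum>l\<in>D. f i j k l)"
    by (rule sum.swap)
  also have "\<dots> = (\<Sum>k\<in>C. \<Sum>i\<in>A. \<Sum>l\<in>D. \<Sum>j\<in>B. f i j k l)"
    by (intro sum.cong refl sum.swap)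
  also have "\<dots> = (\<Sum>k\<in>C. \<Sum>l\<in>D. \<Sum>i\<in>A. \<Sum>j\<in>B. f i j k l)"
    by (intro sum.cong refl sum.swap)
  also have "\<dots> = (\<Sum>k\<in>C. \<Sum>l\<in>D. \<Sum>j\<in>B. \<Sum>i\<in>A. f i j k l)"
    by (intro sum.cong refl sum.swap)
  finally show ?thesis .
qed

lemma index_mult_mat_square:
  "A \<in> carrier_mat d d \<Longrightarrow> B \<in> carrier_mat d d \<Longrightarrow> i < d \<Longrightarrow> j < d \<Longrightarrow>
   (A * B) $$ (i, j) = (\<Sum>k<d. A $$ (i, k) * B $$ (k, j))"
  by (simp add: scalar_prod_def atLeast0LessThan)

lemma madj_carrier [simp]: "A \<in> carrier_mat d d \<Longrightarrow> madj A \<in> carrier_mat d d"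
  by (simp add: madj_def)

lemma madj_dims [simp]: "dim_row (madj A) = dim_col A" "dim_col (madj A) = dim_row A"
  by (simp_all add: madj_def)

lemma madj_index: "A \<in> carrier_mat d d \<Longrightarrow> i < d \<Longrightarrow> j < d \<Longrightarrow> madj A $$ (i, j) = cnj (A $$ (j, i))"
  by (simp add: madj_def)

lemma index_madj_mult_mult:
  assumes K: "K \<in> carrier_mat d d" and B: "B \<in> carrier_mat d d" and x: "x < d" and y: "y < d"
  shows "(madj K * B * K) $$ (x, y) = (\<Sum>j<d. \<Sum>i<d. cnj (K $$ (i, x)) * B $$ (i, j) * K $$ (j, y))"
proof -
  have KB: "madj K * B \<in> carrier_mat d d" using K B by (metis madj_carrier mult_carrier_mat)
  have "(madj K * B * K) $$ (x, y) = (\<Sum>k<d. (madj K * B) $$ (x, k) * K $$ (k, y))"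
    by (rule index_mult_mat_square[OF KB K x y])
  also have "\<dots> = (\<Sum>k<d. (\<Sum>i<d. cnj (K $$ (i, x)) * B $$ (i, k)) * K $$ (k, y))"
  proof (intro sum.cong refl)
    fix k assume "k \<in> {..<d}"
    then have "(madj K * B) $$ (x, k) = (\<Sum>i<d. madj K $$ (x, i) * B $$ (i, k))"
      using K B x by (intro index_mult_mat_square) auto
    then show "(madj K * B) $$ (x, k) * K $$ (k, y) = (\<Sum>i<d. cnj (K $$ (i, x)) * B $$ (i, k)) * K $$ (k, y)"
      using K x by (simp add: madj_index)
  qed
  finally show ?thesis by (simp add: sum_distrib_right)
qed

lemma sesq_one: "sesq d (1\<^sub>m d) u v = (\<Sum>i<d. cnj (u i) * v i)"
  unfolding sesq_def by (intro sum.cong refl) (simp add: if_distrib if_distribR cong: if_cong)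

lemma of_real_sqnorm: "complex_of_real (sqnorm d u) = sesq d (1\<^sub>m d) u u"
proof -
  have "complex_of_real (sqnorm d u) = (\<Sum>i<d. complex_of_real ((cmod (u i))\<^sup>2))"
    by (simp only: sqnorm_def of_real_sum)
  also have "\<dots> = (\<Sum>i<d. u i * cnj (u i))" by (simp only: complex_norm_square)
  finally show ?thesis by (simp add: sesq_one mult.commute)
qed

lemma sesq_mat_apply:
  assumes K: "K \<in> carrier_mat d d" and B: "B \<in> carrier_mat d d"
  shows "sesq d B (mat_apply d K u) (mat_apply d K v) = sesq d (madj K * B * K) u v"
proof -
  have "sesq d B (mat_apply d K u) (mat_apply d K v) =
     (\<Sum>i<d. \<Sum>j<d. \<Sum>l<d. \<Sum>k<d. cnj (K $$ (i, k)) * cnj (u k) * B $$ (i, j) * (K $$ (j, l) * v l))"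
    unfolding sesq_def mat_apply_def
    by (simp add: sum_distrib_left sum_distrib_right mult.assoc)
  also have "\<dots> = (\<Sum>k<d. \<Sum>l<d. \<Sum>j<d. \<Sum>i<d. cnj (K $$ (i, k)) * cnj (u k) * B $$ (i, j) * (K $$ (j, l) * v l))"
    by (rule sum_reverse4)
  also have "\<dots> = sesq d (madj K * B * K) u v"
    unfolding sesq_def using K B
    by (auto intro!: sum.cong simp del: index_mult_mat
        simp: index_madj_mult_mult sum_distrib_left sum_distrib_right mult_ac)
  finally show ?thesis .
qed

lemma sum_sesq: "(\<Sum>a<m. sesq d (X a) u v) = sesq d (msum d m X) u v"
proof -
  have "(\<Sum>a<m. sesq d (X a) u v) = (\<Sum>i<d. \<Sum>j<d. \<Sum>a<m. cnj (u i) * X a $$ (i, j) * v j)"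
    unfolding sesq_def by (subst sum.swap) (simp add: sum.swap[of _ "{..<m}" "{..<d}"])
  also have "\<dots> = sesq d (msum d m X) u v"
    unfolding sesq_def msum_def by (auto intro!: sum.cong simp: sum_distrib_left sum_distrib_right)
  finally show ?thesis .
qed

definition kraus :: "nat \<Rightarrow> nat \<Rightarrow> (nat \<Rightarrow> cmat) \<Rightarrow> bool" where
  "kraus d m K \<longleftrightarrow> (\<forall>a<m. K a \<in> carrier_mat d d) \<and> msum d m (\<lambda>a. madj (K a) * K a) = 1\<^sub>m d"

lemma kraus_sum_sqnorm:
  assumes "kraus d m K"
  shows "(\<Sum>a<m. sqnorm d (mat_apply d (K a) u)) = sqnorm d u"
proof -
  have "(\<Sum>a<m. sesq d (1\<^sub>m d) (mat_apply d (K a) u) (mat_apply d (K a) u))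
      = (\<Sum>a<m. sesq d (madj (K a) * K a) u u)"
  proof (intro sum.cong refl)
    fix a assume "a \<in> {..<m}"
    then have K: "K a \<in> carrier_mat d d" using assms by (auto simp: kraus_def)
    then have "madj (K a) * 1\<^sub>m d = madj (K a)" by (meson madj_carrier right_mult_one_mat)
    then show "sesq d (1\<^sub>m d) (mat_apply d (K a) u) (mat_apply d (K a) u) = sesq d (madj (K a) * K a) u u"
      using K by (simp add: sesq_mat_apply)
  qed
  also have "\<dots> = sesq d (1\<^sub>m d) u u" using assms by (simp add: sum_sesq kraus_def)
  finally have "complex_of_real (\<Sum>a<m. sqnorm d (mat_apply d (K a) u)) = complex_of_real (sqnorm d u)"
    by (simp add: of_real_sqnorm)
  then show ?thesis by (simp only: of_real_eq_iff)
qed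

lemma hermitianD: "hermitian d A \<Longrightarrow> i < d \<Longrightarrow> j < d \<Longrightarrow> A $$ (i, j) = cnj (A $$ (j, i))"
  unfolding hermitian_def by blast

lemma psd_hermitian:
  assumes "psd d A"
  shows "hermitian d A"
proof -
  have "A \<in> carrier_mat d d" "madj A = A" using assms by (simp_all add: psd_def)
  then show ?thesis unfolding hermitian_def by (metis madj_index)
qed

lemma psd_sesq_nonneg:
  assumes "psd d A"
  shows "0 \<le> Re (sesq d A u u)"
proof -
  have A: "A \<in> carrier_mat d d" using assms by (simp add: psd_def)
  have "(\<Sum>i<d. cnj (vec d u $ i) * (A *\<^sub>v vec d u) $ i) = sesq d A u u"
    unfolding sesq_def
  proof (intro sum.cong refl)
    fix i assume i: "i \<in> {..<d}"
    have "(A *\<^sub>v vec d u) $ i = (\<Sum>j<d. A $$ (i, j) * u j)"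
      using A i by (simp add: scalar_prod_def atLeast0LessThan)
    then show "cnj (vec d u $ i) * (A *\<^sub>v vec d u) $ i = (\<Sum>j<d. cnj (u i) * A $$ (i, j) * u j)"
      using i by (simp add: sum_distrib_left mult.assoc)
  qed
  moreover have "0 \<le> Re (\<Sum>i<d. cnj (vec d u $ i) * (A *\<^sub>v vec d u) $ i)"
    using assms unfolding psd_def by (meson vec_carrier)
  ultimately show ?thesis by simp
qed

lemma sesq_hermitian: assumes "hermitian d A" shows "sesq d A v u = cnj (sesq d A u v)"
proof -
  have "cnj (sesq d A u v) = (\<Sum>i<d. \<Sum>j<d. u i * cnj (A $$ (i, j)) * cnj (v j))"
    unfolding sesq_def by simp
  also have "\<dots> = (\<Sum>j<d. \<Sum>i<d. u i * cnj (A $$ (i, j)) * cnj (v j))"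
    by (rule sum.swap)
  also have "\<dots> = sesq d A v u"
    unfolding sesq_def
  proof (intro sum.cong refl)
    fix j i assume "j \<in> {..<d}" "i \<in> {..<d}"
    then have "cnj (A $$ (i, j)) = A $$ (j, i)" using hermitianD[OF assms, of j i] by simp
    then show "u i * cnj (A $$ (i, j)) * cnj (v j) = cnj (v j) * A $$ (j, i) * u i" by (simp add: mult_ac)
  qed
  finally show ?thesis by simp
qed

lemma sesq_add_left: "sesq d A (\<lambda>i. u i + w i) v = sesq d A u v + sesq d A w v"
  unfolding sesq_def by (simp add: algebra_simps sum.distrib)

lemma sesq_add_right: "sesq d A v (\<lambda>i. u i + w i) = sesq d A v u + sesq d A v w"
  unfolding sesq_def by (simp add: algebra_simps sum.distrib)

lemma sesq_diff_left: "sesq d A (\<lambda>i. u i - w i) v = sesq d A u v - sesq d A w v"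
  unfolding sesq_def by (simp add: algebra_simps sum_subtractf)

lemma sesq_diff_right: "sesq d A v (\<lambda>i. u i - w i) = sesq d A v u - sesq d A v w"
  unfolding sesq_def by (simp add: algebra_simps sum_subtractf)

lemma sesq_scale_left: "sesq d A (\<lambda>i. c * u i) v = cnj c * sesq d A u v"
  unfolding sesq_def by (simp add: algebra_simps sum_distrib_left)

lemma sesq_scale_right: "sesq d A v (\<lambda>i. c * u i) = c * sesq d A v u"
  unfolding sesq_def by (simp add: algebra_simps sum_distrib_left)

lemmas sesq_linear =
  sesq_add_left sesq_add_right sesq_diff_left sesq_diff_right sesq_scale_left sesq_scale_right

text \<open>The cross term is controlled by the positivity of the form at \<open>t u - w\<close>.\<close>
lemma psd_sesq_sum_le:
  assumes "psd d A" "t > 0"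
  shows "Re (sesq d A (\<lambda>i. u i + w i) (\<lambda>i. u i + w i))
           \<le> (1 + t) * Re (sesq d A u u) + (1 + 1 / t) * Re (sesq d A w w)"
proof -
  let ?z = "\<lambda>i. complex_of_real t * u i - w i"
  have sym: "Re (sesq d A w u) = Re (sesq d A u w)"
    using sesq_hermitian[OF psd_hermitian[OF assms(1)], of w u] by simp
  have "0 \<le> Re (sesq d A ?z ?z)" by (rule psd_sesq_nonneg[OF assms(1)])
  also have "sesq d A ?z ?z = of_real t * of_real t * sesq d A u u - of_real t * sesq d A u w
      - of_real t * sesq d A w u + sesq d A w w"
    by (simp add: sesq_linear algebra_simps)
  then have "Re (sesq d A ?z ?z) = t * t * Re (sesq d A u u) - 2 * t * Re (sesq d A u w) + Re (sesq d A w w)"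
    using sym by simp
  finally have "2 * Re (sesq d A u w) \<le> t * Re (sesq d A u u) + Re (sesq d A w w) / t"
    using assms(2) by (simp add: field_simps)
  moreover have "Re (sesq d A (\<lambda>i. u i + w i) (\<lambda>i. u i + w i))
      = Re (sesq d A u u) + 2 * Re (sesq d A u w) + Re (sesq d A w w)"
    using sym by (simp add: sesq_add_left sesq_add_right)
  ultimately show ?thesis by (simp add: algebra_simps)
qed

lemma povm_sum_sesq:
  assumes "povm d n E"
  shows "(\<Sum>y<n. Re (sesq d (E y) u u)) = sqnorm d u"
proof -
  have "(\<Sum>y<n. sesq d (E y) u u) = complex_of_real (sqnorm d u)"
    using assms by (simp add: sum_sesq povm_def of_real_sqnorm)
  then show ?thesis by (metis Re_complex_of_real Re_sum)
qed

lemma povm_sesq_le: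
  assumes "povm d n E" "x < n"
  shows "Re (sesq d (E x) u u) \<le> sqnorm d u"
proof -
  have "Re (sesq d (E x) u u) \<le> (\<Sum>y<n. Re (sesq d (E y) u u))"
    using assms by (intro member_le_sum) (auto simp: povm_def psd_sesq_nonneg)
  then show ?thesis using povm_sum_sesq[OF assms(1)] by simp
qed

section \<open>Ensembles of vectors\<close>

text \<open>A list of unnormalised vectors \<open>L\<close> stands for the matrix \<open>\<Sum>u\<in>L. u u\<^sup>*\<close>.\<close>
definition ensemble_mat :: "nat \<Rightarrow> (nat \<Rightarrow> complex) list \<Rightarrow> cmat" where
  "ensemble_mat d L = mat d d (\<lambda>(i, j). \<Sum>u\<leftarrow>L. u i * cnj (u j))"

definition rscale :: "real \<Rightarrow> (nat \<Rightarrow> complex) \<Rightarrow> nat \<Rightarrow> complex" where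
  "rscale c u = (\<lambda>i. complex_of_real c * u i)"

definition scaled_unit :: "real \<Rightarrow> nat \<Rightarrow> nat \<Rightarrow> complex" where
  "scaled_unit r l = (\<lambda>i. if i = l then complex_of_real r else 0)"

definition phase_flip :: "nat \<Rightarrow> nat \<Rightarrow> (nat \<Rightarrow> complex) \<Rightarrow> nat \<Rightarrow> complex" where
  "phase_flip M x u = (\<lambda>i. (if i div M = x then -1 else 1) * u i)"

lemma ensemble_mat_carrier [simp]: "ensemble_mat d L \<in> carrier_mat d d"
  by (simp add: ensemble_mat_def)

lemma ensemble_mat_dims [simp]: "dim_row (ensemble_mat d L) = d" "dim_col (ensemble_mat d L) = d"
  by (simp_all add: ensemble_mat_def)

lemma ensemble_mat_index:
  "i < d \<Longrightarrow> j < d \<Longrightarrow> ensemble_mat d L $$ (i, j) = (\<Sum>u\<leftarrow>L. u i * cnj (u j))"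
  by (simp add: ensemble_mat_def)

lemma ensemble_mat_append: "ensemble_mat d (L1 @ L2) = ensemble_mat d L1 + ensemble_mat d L2"
  by (rule eq_matI) (auto simp: ensemble_mat_index)

lemma msum_ensemble_mat:
  "msum d m (\<lambda>a. ensemble_mat d (f a)) = ensemble_mat d (concat (map f [0..<m]))"
  by (rule eq_matI) (auto simp: msum_def ensemble_mat_index sum_list_concat_map o_def sum_list_upt_eq_sum)

lemma conj_ensemble_mat:
  assumes K: "K \<in> carrier_mat d d"
  shows "K * ensemble_mat d L * madj K = ensemble_mat d (map (mat_apply d K) L)"
proof (rule eq_matI)
  fix i j assume "i < dim_row (ensemble_mat d (map (mat_apply d K) L))"
    and "j < dim_col (ensemble_mat d (map (mat_apply d K) L))"
  then have i: "i < d" and j: "j < d" by auto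
  have KL: "K * ensemble_mat d L \<in> carrier_mat d d" using K by (metis ensemble_mat_carrier mult_carrier_mat)
  have "(K * ensemble_mat d L * madj K) $$ (i, j) = (\<Sum>l<d. (K * ensemble_mat d L) $$ (i, l) * madj K $$ (l, j))"
    using KL K i j by (intro index_mult_mat_square) auto
  also have "\<dots> = (\<Sum>l<d. (\<Sum>k<d. K $$ (i, k) * (\<Sum>u\<leftarrow>L. u k * cnj (u l))) * cnj (K $$ (j, l)))"
  proof (intro sum.cong refl)
    fix l assume l: "l \<in> {..<d}"
    have "(K * ensemble_mat d L) $$ (i, l) = (\<Sum>k<d. K $$ (i, k) * (\<Sum>u\<leftarrow>L. u k * cnj (u l)))"
      using K i l by (subst index_mult_mat_square) (auto intro!: sum.cong simp: ensemble_mat_index)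
    then show "(K * ensemble_mat d L) $$ (i, l) * madj K $$ (l, j)
        = (\<Sum>k<d. K $$ (i, k) * (\<Sum>u\<leftarrow>L. u k * cnj (u l))) * cnj (K $$ (j, l))"
      using K l j by (simp add: madj_index)
  qed
  also have "\<dots> = (\<Sum>l<d. \<Sum>k<d. \<Sum>u\<leftarrow>L. K $$ (i, k) * u k * cnj (u l) * cnj (K $$ (j, l)))"
    by (simp add: sum_distrib_right sum_distrib_left sum_list_const_mult[symmetric]
        sum_list_mult_const[symmetric] mult.assoc)
  also have "\<dots> = (\<Sum>u\<leftarrow>L. \<Sum>l<d. \<Sum>k<d. K $$ (i, k) * u k * cnj (u l) * cnj (K $$ (j, l)))"
    by (simp add: sum_list_sum_swap)
  also have "\<dots> = ensemble_mat d (map (mat_apply d K) L) $$ (i, j)"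
    using i j by (simp add: ensemble_mat_index mat_apply_def o_def sum_distrib_right sum_distrib_left mult_ac)
  finally show "(K * ensemble_mat d L * madj K) $$ (i, j) = ensemble_mat d (map (mat_apply d K) L) $$ (i, j)" .
qed (use K in auto)

lemma mtr_ensemble_mat: "mtr (ensemble_mat d L) = complex_of_real (\<Sum>u\<leftarrow>L. sqnorm d u)"
proof -
  have "mtr (ensemble_mat d L) = (\<Sum>u\<leftarrow>L. \<Sum>i<d. u i * cnj (u i))"
    by (simp add: mtr_def ensemble_mat_index sum_list_sum_swap)
  also have "\<dots> = (\<Sum>u\<leftarrow>L. complex_of_real (sqnorm d u))"
    by (simp add: of_real_sqnorm sesq_one mult.commute)
  also have "\<dots> = complex_of_real (\<Sum>u\<leftarrow>L. sqnorm d u)"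
    by (induct L) auto
  finally show ?thesis .
qed

lemma mtr_mult_ensemble_mat:
  assumes E: "E \<in> carrier_mat d d"
  shows "mtr (E * ensemble_mat d L) = (\<Sum>u\<leftarrow>L. sesq d E u u)"
proof -
  have "mtr (E * ensemble_mat d L) = (\<Sum>i<d. \<Sum>k<d. E $$ (i, k) * (\<Sum>u\<leftarrow>L. u k * cnj (u i)))"
    unfolding mtr_def using E
    by (intro sum.cong) (auto simp del: index_mult_mat
        simp: index_mult_mat_square[OF E ensemble_mat_carrier] ensemble_mat_index carrier_matD index_mult_mat(2))
  also have "\<dots> = (\<Sum>u\<leftarrow>L. \<Sum>i<d. \<Sum>k<d. cnj (u i) * E $$ (i, k) * u k)"
    by (simp add: sum_distrib_left sum_list_const_mult[symmetric] sum_list_sum_swap mult_ac)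
  finally show ?thesis by (simp add: sesq_def)
qed

lemma query_op_ensemble_mat:
  "query_op n M x (ensemble_mat (n * M) L) = ensemble_mat (n * M) (map (phase_flip M x) L)"
  by (rule eq_matI) (auto simp: query_op_def ensemble_mat_index phase_flip_def o_def uminus_sum_list_map)

lemma ensemble_mat_rscale: "ensemble_mat d (map (rscale c) L) = complex_of_real (c\<^sup>2) \<cdot>\<^sub>m ensemble_mat d L"
  by (rule eq_matI)
    (auto simp: ensemble_mat_index rscale_def o_def sum_list_const_mult[symmetric] power2_eq_square mult_ac)

lemma ensemble_mat_scaled_units:
  "ensemble_mat d (map (scaled_unit r) [0..<d]) = complex_of_real (r\<^sup>2) \<cdot>\<^sub>m 1\<^sub>m d"
proof (rule eq_matI)
  fix i j assume "i < dim_row (complex_of_real (r\<^sup>2) \<cdot>\<^sub>m 1\<^sub>m d)" "j < dim_col (complex_of_real (r\<^sup>2) \<cdot>\<^sub>m 1\<^sub>m d)"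
  then have i: "i < d" and j: "j < d" by auto
  have "ensemble_mat d (map (scaled_unit r) [0..<d]) $$ (i, j) = (\<Sum>l<d. scaled_unit r l i * cnj (scaled_unit r l j))"
    using i j by (simp add: ensemble_mat_index o_def sum_list_upt_eq_sum)
  also have "\<dots> = (\<Sum>l<d. if l = i then (if i = j then complex_of_real (r\<^sup>2) else 0) else 0)"
    by (intro sum.cong refl) (auto simp: scaled_unit_def power2_eq_square)
  finally show "ensemble_mat d (map (scaled_unit r) [0..<d]) $$ (i, j) = (complex_of_real (r\<^sup>2) \<cdot>\<^sub>m 1\<^sub>m d) $$ (i, j)"
    using i j by simp
qed auto

definition depol_ens :: "real \<Rightarrow> nat \<Rightarrow> (nat \<Rightarrow> complex) list \<Rightarrow> (nat \<Rightarrow> complex) list" where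
  "depol_ens p d L = map (rscale (sqrt (1 - p))) L @ map (scaled_unit (sqrt (p / d))) [0..<d]"

lemma depol_ensemble_mat:
  assumes "mtr (ensemble_mat d L) = 1" "0 \<le> p" "p \<le> 1"
  shows "depol p d (ensemble_mat d L) = ensemble_mat d (depol_ens p d L)"
proof -
  have "ensemble_mat d (depol_ens p d L)
     = complex_of_real (1 - p) \<cdot>\<^sub>m ensemble_mat d L + complex_of_real (p / d) \<cdot>\<^sub>m 1\<^sub>m d"
    using assms by (simp add: depol_ens_def ensemble_mat_append ensemble_mat_rscale ensemble_mat_scaled_units)
  then show ?thesis
    using assms by (simp add: depol_def comm_add_mat[of _ d d])
qed

definition kraus_ens :: "nat \<Rightarrow> nat \<Rightarrow> (nat \<Rightarrow> cmat) \<Rightarrow> (nat \<Rightarrow> complex) list \<Rightarrow> (nat \<Rightarrow> complex) list" where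
  "kraus_ens d m K L = concat (map (\<lambda>a. map (mat_apply d (K a)) L) [0..<m])"

lemma msum_cong: "(\<And>a. a < m \<Longrightarrow> F a = G a) \<Longrightarrow> msum d m F = msum d m G"
  unfolding msum_def by (intro cong_mat refl) auto

lemma ensemble_mat_kraus_ens:
  assumes "kraus d m K"
  shows "ensemble_mat d (kraus_ens d m K L) = msum d m (\<lambda>a. K a * ensemble_mat d L * madj (K a))"
proof -
  have "msum d m (\<lambda>a. K a * ensemble_mat d L * madj (K a)) = msum d m (\<lambda>a. ensemble_mat d (map (mat_apply d (K a)) L))"
    using assms by (intro msum_cong) (simp add: kraus_def conj_ensemble_mat)
  then show ?thesis by (simp add: msum_ensemble_mat kraus_ens_def)
qed

lemma sum_list_kraus_ens:
  "(\<Sum>u\<leftarrow>kraus_ens d m K L. f u) = (\<Sum>a<m. \<Sum>u\<leftarrow>L. f (mat_apply d (K a) u))"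
  by (simp add: kraus_ens_def sum_list_concat_map o_def sum_list_upt_eq_sum)

lemma sum_sqnorm_kraus_ens:
  "kraus d m K \<Longrightarrow> (\<Sum>u\<leftarrow>kraus_ens d m K L. sqnorm d u) = (\<Sum>u\<leftarrow>L. sqnorm d u)"
  by (simp add: sum_list_kraus_ens sum_list_sum_swap[symmetric] kraus_sum_sqnorm)

lemma sqnorm_rscale: "sqnorm d (rscale c u) = c\<^sup>2 * sqnorm d u"
  by (simp add: sqnorm_def rscale_def norm_mult power_mult_distrib sum_distrib_left)

lemma sqnorm_scaled_unit: "l < d \<Longrightarrow> sqnorm d (scaled_unit r l) = r\<^sup>2"
proof -
  have "sqnorm d (scaled_unit r l) = (\<Sum>i<d. if i = l then r\<^sup>2 else 0)"
    unfolding sqnorm_def by (intro sum.cong refl) (auto simp: scaled_unit_def)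
  then show "l < d \<Longrightarrow> ?thesis" by simp
qed

lemma sum_sqnorm_depol_ens:
  assumes "0 \<le> p" "p \<le> 1" "0 < d"
  shows "(\<Sum>u\<leftarrow>depol_ens p d L. sqnorm d u) = (1 - p) * (\<Sum>u\<leftarrow>L. sqnorm d u) + p"
proof -
  have "(\<Sum>u\<leftarrow>map (scaled_unit (sqrt (p / d))) [0..<d]. sqnorm d u) = (\<Sum>l<d. p / d)"
    using assms by (simp add: o_def sum_list_upt_eq_sum sqnorm_scaled_unit)
  then show ?thesis
    using assms by (simp add: depol_ens_def o_def sqnorm_rscale sum_list_const_mult)
qed

lemma sqnorm_phase_flip: "sqnorm d (phase_flip M x u) = sqnorm d u"
  unfolding sqnorm_def phase_flip_def by (intro sum.cong refl) (auto simp: norm_mult)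

section \<open>Coupled ensembles\<close>

text \<open>A pair \<open>(u, w)\<close> couples a branch of the evolution with oracle calls to the same branch of
  the oracle-free evolution; both components are always transformed by the same Kraus operator.\<close>
type_synonym coupling = "((nat \<Rightarrow> complex) \<times> (nat \<Rightarrow> complex)) list"

definition kraus_pairs :: "nat \<Rightarrow> nat \<Rightarrow> (nat \<Rightarrow> cmat) \<Rightarrow> coupling \<Rightarrow> coupling" where
  "kraus_pairs d m K P = concat (map (\<lambda>a. map (map_prod (mat_apply d (K a)) (mat_apply d (K a))) P) [0..<m])"

definition flip_pairs :: "nat \<Rightarrow> nat \<Rightarrow> coupling \<Rightarrow> coupling" where
  "flip_pairs M x P = map (apfst (phase_flip M x)) P"

definition depol_pairs :: "real \<Rightarrow> nat \<Rightarrow> coupling \<Rightarrow> coupling" where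
  "depol_pairs p d P = map (map_prod (rscale (sqrt (1 - p))) (rscale (sqrt (1 - p)))) P
      @ map (\<lambda>l. (scaled_unit (sqrt (p / d)) l, scaled_unit (sqrt (p / d)) l)) [0..<d]"

definition pair_dist :: "nat \<Rightarrow> coupling \<Rightarrow> real" where
  "pair_dist d P = (\<Sum>q\<leftarrow>P. sqnorm d (\<lambda>i. fst q i - snd q i))"

lemma pair_dist_nonneg: "0 \<le> pair_dist d P"
  unfolding pair_dist_def sqnorm_def by (auto intro!: sum_list_nonneg sum_nonneg)

lemma map_fst_kraus_pairs: "map fst (kraus_pairs d m K P) = kraus_ens d m K (map fst P)"
  by (simp add: kraus_pairs_def kraus_ens_def map_concat o_def)

lemma map_snd_kraus_pairs: "map snd (kraus_pairs d m K P) = kraus_ens d m K (map snd P)"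
  by (simp add: kraus_pairs_def kraus_ens_def map_concat o_def)

lemma map_fst_flip_pairs: "map fst (flip_pairs M x P) = map (phase_flip M x) (map fst P)"
  by (simp add: flip_pairs_def o_def)

lemma map_snd_flip_pairs: "map snd (flip_pairs M x P) = map snd P"
  by (simp add: flip_pairs_def o_def)

lemma map_fst_depol_pairs: "map fst (depol_pairs p d P) = depol_ens p d (map fst P)"
  by (simp add: depol_pairs_def depol_ens_def o_def)

lemma map_snd_depol_pairs: "map snd (depol_pairs p d P) = depol_ens p d (map snd P)"
  by (simp add: depol_pairs_def depol_ens_def o_def)

lemma pair_dist_kraus_pairs: "kraus d m K \<Longrightarrow> pair_dist d (kraus_pairs d m K P) = pair_dist d P"
proof -
  have "mat_apply d A u i - mat_apply d A w i = mat_apply d A (\<lambda>j. u j - w j) i" for A u w i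
    by (simp add: mat_apply_def algebra_simps sum_subtractf)
  then show "kraus d m K \<Longrightarrow> ?thesis"
    by (simp add: pair_dist_def kraus_pairs_def sum_list_concat_map o_def sum_list_upt_eq_sum
        sum_list_sum_swap[symmetric] kraus_sum_sqnorm)
qed

lemma pair_dist_depol_pairs:
  assumes "0 \<le> p" "p \<le> 1"
  shows "pair_dist d (depol_pairs p d P) = (1 - p) * pair_dist d P"
proof -
  have "(\<lambda>i. rscale c u i - rscale c w i) = rscale c (\<lambda>i. u i - w i)" for c u w
    by (auto simp: rscale_def algebra_simps)
  then show ?thesis
    using assms by (simp add: pair_dist_def depol_pairs_def o_def sqnorm_rscale sum_list_const_mult,
        simp add: sqnorm_def)
qed

definition block_weight :: "nat \<Rightarrow> nat \<Rightarrow> nat \<Rightarrow> (nat \<Rightarrow> complex) \<Rightarrow> real" where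
  "block_weight n M x w = (\<Sum>i<n * M. if i div M = x then (cmod (w i))\<^sup>2 else 0)"

lemma sum_block_weight: "(\<Sum>x<n. block_weight n M x w) = sqnorm (n * M) w"
proof -
  have "(\<Sum>x<n. block_weight n M x w) = (\<Sum>i<n * M. \<Sum>x<n. if i div M = x then (cmod (w i))\<^sup>2 else 0)"
    unfolding block_weight_def by (rule sum.swap)
  also have "\<dots> = (\<Sum>i<n * M. (cmod (w i))\<^sup>2)"
  proof (intro sum.cong refl)
    fix i assume "i \<in> {..<n * M}"
    then have "i div M < n" by (simp add: less_mult_imp_div_less mult.commute)
    then show "(\<Sum>x<n. if i div M = x then (cmod (w i))\<^sup>2 else 0) = (cmod (w i))\<^sup>2"
      by simp
  qed
  finally show ?thesis by (simp add: sqnorm_def)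
qed

lemma cmod_add_sq_le: "t > 0 \<Longrightarrow> (cmod (a + b))\<^sup>2 \<le> (1 + t) * (cmod a)\<^sup>2 + (1 + 1 / t) * (cmod b)\<^sup>2"
proof -
  assume t: "t > 0"
  have "(cmod (a + b))\<^sup>2 \<le> (cmod a + cmod b)\<^sup>2"
    by (simp add: norm_triangle_ineq power_mono)
  also have "\<dots> \<le> (1 + t) * (cmod a)\<^sup>2 + (1 + 1 / t) * (cmod b)\<^sup>2"
  proof -
    have "0 \<le> (t * cmod a - cmod b)\<^sup>2 / t" using t by simp
    then show ?thesis using t by (simp add: field_simps power2_eq_square)
  qed
  finally show ?thesis .
qed

text \<open>Split \<open>flip u - w = (flip u - flip w) + (flip w - w)\<close>: the flip is an isometry, and
  \<open>flip w - w\<close> is \<open>-2 w\<close> on the block of \<open>x\<close> and zero elsewhere.\<close>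
lemma sqnorm_flip_diff_le:
  assumes t: "t > 0"
  shows "sqnorm (n * M) (\<lambda>i. phase_flip M x u i - w i)
    \<le> (1 + t) * sqnorm (n * M) (\<lambda>i. u i - w i) + (1 + 1 / t) * 4 * block_weight n M x w"
proof -
  have "sqnorm (n * M) (\<lambda>i. phase_flip M x u i - w i) \<le> (\<Sum>i<n * M. (1 + t) * (cmod (u i - w i))\<^sup>2
      + (1 + 1 / t) * (4 * (if i div M = x then (cmod (w i))\<^sup>2 else 0)))"
    unfolding sqnorm_def
  proof (intro sum_mono)
    fix i
    have "phase_flip M x u i - w i = (phase_flip M x u i - phase_flip M x w i) + (phase_flip M x w i - w i)"
      by simp
    then have "(cmod (phase_flip M x u i - w i))\<^sup>2 \<le> (1 + t) * (cmod (phase_flip M x u i - phase_flip M x w i))\<^sup>2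
        + (1 + 1 / t) * (cmod (phase_flip M x w i - w i))\<^sup>2"
      using cmod_add_sq_le[OF t] by metis
    moreover have "cmod (phase_flip M x u i - phase_flip M x w i) = cmod (u i - w i)"
      by (auto simp: phase_flip_def norm_minus_commute simp flip: right_diff_distrib)
    moreover have "(cmod (phase_flip M x w i - w i))\<^sup>2 = 4 * (if i div M = x then (cmod (w i))\<^sup>2 else 0)"
      by (auto simp: phase_flip_def power2_eq_square)
    ultimately show "(cmod (phase_flip M x u i - w i))\<^sup>2 \<le> (1 + t) * (cmod (u i - w i))\<^sup>2
        + (1 + 1 / t) * (4 * (if i div M = x then (cmod (w i))\<^sup>2 else 0))"
      by simp
  qed
  also have "\<dots> = (1 + t) * sqnorm (n * M) (\<lambda>i. u i - w i) + (1 + 1 / t) * 4 * block_weight n M x w"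
    by (simp add: sqnorm_def block_weight_def sum.distrib sum_distrib_left mult.assoc[symmetric])
  finally show ?thesis .
qed

lemma pair_dist_flip_pairs_le:
  assumes "t > 0"
  shows "pair_dist (n * M) (flip_pairs M x P)
    \<le> (1 + t) * pair_dist (n * M) P + (1 + 1 / t) * 4 * (\<Sum>w\<leftarrow>map snd P. block_weight n M x w)"
proof -
  have "pair_dist (n * M) (flip_pairs M x P) \<le> (\<Sum>q\<leftarrow>P. (1 + t) * sqnorm (n * M) (\<lambda>i. fst q i - snd q i)
      + (1 + 1 / t) * 4 * block_weight n M x (snd q))"
    unfolding pair_dist_def flip_pairs_def
    using sqnorm_flip_diff_le[OF assms] by (simp add: o_def case_prod_beta sum_list_mono)
  then show ?thesis
    by (simp add: sum_list_addf pair_dist_def sum_list_const_mult o_def)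
qed

section \<open>Positive semidefinite matrices are ensembles\<close>

lemma sesq_scaled_unit_right: "c < d \<Longrightarrow> sesq d A u (scaled_unit 1 c) = (\<Sum>i<d. cnj (u i) * A $$ (i, c))"
proof -
  assume c: "c < d"
  have "sesq d A u (scaled_unit 1 c) = (\<Sum>i<d. \<Sum>j<d. if j = c then cnj (u i) * A $$ (i, c) else 0)"
    unfolding sesq_def scaled_unit_def by (intro sum.cong refl) auto
  then show ?thesis using c by simp
qed

lemma sesq_scaled_units: "i < d \<Longrightarrow> j < d \<Longrightarrow> sesq d A (scaled_unit 1 i) (scaled_unit 1 j) = A $$ (i, j)"
proof -
  assume i: "i < d" and j: "j < d"
  have "sesq d A (scaled_unit 1 i) (scaled_unit 1 j) = (\<Sum>k<d. if k = i then A $$ (i, j) else 0)"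
    unfolding sesq_scaled_unit_right[OF j] by (intro sum.cong refl) (auto simp: scaled_unit_def)
  then show ?thesis using i by simp
qed

lemma of_real_cmod_sq: "(complex_of_real (cmod a))\<^sup>2 = a * cnj a"
  by (metis complex_norm_square of_real_power)

lemma hermitian_diag_real: "hermitian d A \<Longrightarrow> c < d \<Longrightarrow> A $$ (c, c) = complex_of_real (Re (A $$ (c, c)))"
proof -
  assume "hermitian d A" "c < d"
  then have "Im (A $$ (c, c)) = - Im (A $$ (c, c))" using hermitianD[of d A c c] by (metis cnj.simps(2))
  then show ?thesis by (simp add: complex_eq_iff)
qed

text \<open>Otherwise a large multiple of \<open>e\<^sub>c\<close> added to \<open>e\<^sub>i\<close> makes the form negative.\<close>
lemma psd_zero_diag_column:
  assumes H: "hermitian d A" and P: "\<And>u. 0 \<le> Re (sesq d A u u)"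
    and c: "c < d" and i: "i < d" and z: "A $$ (c, c) = 0"
  shows "A $$ (i, c) = 0"
proof (rule ccontr)
  let ?a = "A $$ (i, c)"
  assume "?a \<noteq> 0"
  then have a: "(cmod ?a)\<^sup>2 > 0" by simp
  define \<tau> where "\<tau> = (\<bar>Re (A $$ (i, i))\<bar> + 1) / (cmod ?a)\<^sup>2"
  define \<beta> where "\<beta> = - complex_of_real \<tau> * cnj ?a"
  let ?u = "\<lambda>j. scaled_unit 1 i j + \<beta> * scaled_unit 1 c j"
  have "sesq d A ?u ?u = A $$ (i, i) + \<beta> * ?a + cnj \<beta> * cnj ?a + cnj \<beta> * \<beta> * A $$ (c, c)"
    using c i hermitianD[OF H c i] by (simp add: sesq_linear sesq_scaled_units algebra_simps)
  moreover have "\<beta> * ?a = - complex_of_real (\<tau> * (cmod ?a)\<^sup>2)"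
    by (simp add: \<beta>_def of_real_cmod_sq mult_ac)
  moreover have "cnj \<beta> * cnj ?a = - complex_of_real (\<tau> * (cmod ?a)\<^sup>2)"
    using arg_cong[OF calculation(2), of cnj] by simp
  ultimately have "sesq d A ?u ?u = A $$ (i, i) - 2 * complex_of_real (\<tau> * (cmod ?a)\<^sup>2)"
    using z by simp
  then have "Re (sesq d A ?u ?u) = Re (A $$ (i, i)) - 2 * (\<bar>Re (A $$ (i, i))\<bar> + 1)"
    using a by (simp add: \<tau>_def)
  then show False using P[of ?u] by (simp add: abs_if split: if_splits)
qed

lemma psd_pivot_cauchy_schwarz:
  assumes H: "hermitian d A" and P: "\<And>u. 0 \<le> Re (sesq d A u u)"
    and c: "c < d" and r: "Re (A $$ (c, c)) > 0"
  shows "(cmod (sesq d A u (scaled_unit 1 c)))\<^sup>2 \<le> Re (A $$ (c, c)) * Re (sesq d A u u)"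
proof -
  define b where "b = sesq d A u (scaled_unit 1 c)"
  define r where "r = Re (A $$ (c, c))"
  have r0: "r > 0" using r by (simp add: r_def)
  have acc: "A $$ (c, c) = complex_of_real r" using hermitian_diag_real[OF H c] by (simp add: r_def)
  define \<beta> where "\<beta> = - cnj b / complex_of_real r"
  define X where "X = (cmod b)\<^sup>2 / r"
  let ?w = "\<lambda>j. u j + \<beta> * scaled_unit 1 c j"
  have eu: "sesq d A (scaled_unit 1 c) u = cnj b" unfolding b_def by (rule sesq_hermitian[OF H])
  have e1: "sesq d A ?w ?w = sesq d A u u + \<beta> * b + cnj \<beta> * cnj b + cnj \<beta> * \<beta> * A $$ (c, c)"
    using c eu by (simp add: sesq_linear sesq_scaled_units algebra_simps b_def)
  have bb: "\<beta> * b = - complex_of_real X"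
    using r0 by (simp add: \<beta>_def X_def of_real_cmod_sq field_simps)
  have bb2: "cnj \<beta> * cnj b = - complex_of_real X"
    using arg_cong[OF bb, of cnj] by simp
  have nb: "cmod \<beta> = cmod b / r" using r0 by (simp add: \<beta>_def norm_divide)
  have "cnj \<beta> * \<beta> * A $$ (c, c) = complex_of_real ((cmod \<beta>)\<^sup>2 * r)"
    by (simp add: of_real_cmod_sq acc mult_ac)
  also have "(cmod \<beta>)\<^sup>2 * r = X" unfolding nb X_def using r0 by (simp add: power2_eq_square field_simps)
  finally have "sesq d A ?w ?w = sesq d A u u - complex_of_real X"
    using e1 bb bb2 by simp
  then have "0 \<le> Re (sesq d A u u) - X" using P[of ?w] by simp
  then show ?thesis using r0 by (simp add: X_def b_def r_def field_simps)
qed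

text \<open>The invariant of Cholesky elimination: the Schur complement step at the pivot \<open>c\<close>
  passes from \<open>c\<close> to \<open>c + 1\<close>.\<close>
definition psd_from :: "nat \<Rightarrow> nat \<Rightarrow> cmat \<Rightarrow> bool" where
  "psd_from d c A \<longleftrightarrow> A \<in> carrier_mat d d \<and> hermitian d A \<and> (\<forall>u. 0 \<le> Re (sesq d A u u)) \<and>
     (\<forall>i<d. \<forall>j<d. (i < c \<or> j < c) \<longrightarrow> A $$ (i, j) = 0)"

definition pivot_vec :: "cmat \<Rightarrow> nat \<Rightarrow> nat \<Rightarrow> complex" where
  "pivot_vec A c = (\<lambda>i. A $$ (i, c) / complex_of_real (sqrt (Re (A $$ (c, c)))))"

definition schur_step :: "nat \<Rightarrow> cmat \<Rightarrow> nat \<Rightarrow> cmat" where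
  "schur_step d A c = mat d d (\<lambda>(i, j). A $$ (i, j) - pivot_vec A c i * cnj (pivot_vec A c j))"

lemma schur_step_psd:
  assumes H: "hermitian d A" and P: "\<And>u. 0 \<le> Re (sesq d A u u)"
    and c: "c < d" and r: "Re (A $$ (c, c)) > 0"
  shows "0 \<le> Re (sesq d (schur_step d A c) u u)"
proof -
  let ?v = "pivot_vec A c"
  let ?g = "\<Sum>i<d. cnj (u i) * ?v i"
  have form: "sesq d (schur_step d A c) u u = sesq d A u u - ?g * cnj ?g"
    unfolding sesq_def schur_step_def
    by (simp add: sum_subtractf algebra_simps sum_distrib_left sum_distrib_right)
  have "?g = sesq d A u (scaled_unit 1 c) / complex_of_real (sqrt (Re (A $$ (c, c))))"
    using c by (simp add: sesq_scaled_unit_right pivot_vec_def sum_divide_distrib)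
  then have "(cmod ?g)\<^sup>2 = (cmod (sesq d A u (scaled_unit 1 c)))\<^sup>2 / Re (A $$ (c, c))"
    using r by (simp add: norm_divide power_divide)
  also have "\<dots> \<le> Re (sesq d A u u)"
    using psd_pivot_cauchy_schwarz[OF H P c r, of u] r by (simp add: field_simps)
  finally have "(cmod ?g)\<^sup>2 \<le> Re (sesq d A u u)" .
  moreover have "Re (?g * cnj ?g) = (cmod ?g)\<^sup>2"
    by (simp only: complex_mult_cnj Re_complex_of_real cmod_power2)
  ultimately show ?thesis by (simp add: form)
qed

lemma psd_from_schur_step:
  assumes A: "psd_from d c A" and c: "c < d" and nz: "A $$ (c, c) \<noteq> 0"
  shows "psd_from d (Suc c) (schur_step d A c)"
proof -
  have H: "hermitian d A" and P: "\<And>u. 0 \<le> Re (sesq d A u u)"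
    and Z: "\<And>i j. i < d \<Longrightarrow> j < d \<Longrightarrow> i < c \<or> j < c \<Longrightarrow> A $$ (i, j) = 0"
    using A by (auto simp: psd_from_def)
  define r where "r = Re (A $$ (c, c))"
  have acc: "A $$ (c, c) = complex_of_real r" using hermitian_diag_real[OF H c] by (simp add: r_def)
  have "r \<ge> 0" using P[of "scaled_unit 1 c"] c by (simp add: sesq_scaled_units r_def)
  with nz acc have r: "r > 0" by fastforce
  let ?v = "pivot_vec A c"
  have vc: "?v c = complex_of_real (sqrt r)"
    unfolding pivot_vec_def r_def[symmetric] acc using r by (simp add: real_div_sqrt flip: of_real_divide)
  have row_c: "A $$ (c, j) = ?v c * cnj (?v j)" if "j < d" for j
    using r hermitianD[OF H c that] unfolding vc by (simp add: pivot_vec_def r_def[symmetric])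
  have col_c: "A $$ (i, c) = ?v i * cnj (?v c)" if "i < d" for i
    using r unfolding vc by (simp add: pivot_vec_def r_def[symmetric])
  have "schur_step d A c $$ (i, j) = 0" if ij: "i < d" "j < d" and pos: "i < Suc c \<or> j < Suc c" for i j
  proof -
    have entry: "schur_step d A c $$ (i, j) = A $$ (i, j) - ?v i * cnj (?v j)"
      using ij by (simp add: schur_step_def)
    consider "i < c" | "j < c" | "i = c" | "j = c" using pos by linarith
    then show ?thesis
    proof cases
      case 1
      then show ?thesis using entry ij c Z[of i j] Z[of i c] by (simp add: pivot_vec_def)
    next
      case 2
      then show ?thesis using entry ij c Z[of i j] Z[of j c] by (simp add: pivot_vec_def)
    next
      case 3
      then show ?thesis using entry row_c ij by simp
    next
      case 4
      then show ?thesis using entry col_c ij by simp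
    qed
  qed
  moreover have "hermitian d (schur_step d A c)"
    unfolding hermitian_def
  proof (intro allI impI)
    fix i j assume "i < d" "j < d"
    then show "schur_step d A c $$ (i, j) = cnj (schur_step d A c $$ (j, i))"
      using hermitianD[OF H, of i j] by (simp add: schur_step_def)
  qed
  moreover have "0 \<le> Re (sesq d (schur_step d A c) u u)" for u
    using schur_step_psd[OF H P c] r by (simp add: r_def)
  ultimately show ?thesis unfolding psd_from_def by (simp add: schur_step_def)
qed

lemma psd_from_ensemble_mat: "psd_from d c A \<Longrightarrow> \<exists>L. ensemble_mat d L = A"
proof (induct "d - c" arbitrary: c A)
  case 0
  then have "A = ensemble_mat d []"
    by (intro eq_matI) (auto simp: psd_from_def ensemble_mat_index)
  then show ?case by blast
next
  case (Suc k)
  then have c: "c < d" and k: "d - Suc c = k" by simp_all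
  have A: "A \<in> carrier_mat d d" and H: "hermitian d A" and P: "\<And>u. 0 \<le> Re (sesq d A u u)"
    using Suc.prems by (auto simp: psd_from_def)
  show ?case
  proof (cases "A $$ (c, c) = 0")
    case True
    have "A $$ (i, c) = 0" "A $$ (c, i) = 0" if "i < d" for i
      using psd_zero_diag_column[OF H P c that True] hermitianD[OF H c that] by simp_all
    then have "psd_from d (Suc c) A"
      using Suc.prems by (auto simp: psd_from_def less_Suc_eq)
    then show ?thesis using Suc.hyps(1)[OF k[symmetric]] by simp
  next
    case False
    obtain L where L: "ensemble_mat d L = schur_step d A c"
      using Suc.hyps(1)[OF k[symmetric] psd_from_schur_step[OF Suc.prems c False]] by blast
    have "ensemble_mat d (pivot_vec A c # L) = A"
    proof (rule eq_matI)
      fix i j assume "i < dim_row A" "j < dim_col A"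
      then have i: "i < d" and j: "j < d" using A by auto
      have "ensemble_mat d (pivot_vec A c # L) $$ (i, j)
          = pivot_vec A c i * cnj (pivot_vec A c j) + ensemble_mat d L $$ (i, j)"
        using i j by (simp add: ensemble_mat_index)
      then show "ensemble_mat d (pivot_vec A c # L) $$ (i, j) = A $$ (i, j)"
        using i j by (simp add: L schur_step_def)
    qed (use A in auto)
    then show ?thesis by blast
  qed
qed

lemma density_ensemble_mat:
  assumes "density d \<rho>"
  shows "\<exists>L. ensemble_mat d L = \<rho>"
proof -
  have "psd d \<rho>" using assms by (simp add: density_def)
  then have "psd_from d 0 \<rho>"
    unfolding psd_from_def using psd_hermitian psd_sesq_nonneg by (auto simp: psd_def)
  then show ?thesis by (rule psd_from_ensemble_mat)
qed

section \<open>One round of the algorithm\<close>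

definition kraus_channel :: "nat \<Rightarrow> nat \<Rightarrow> (nat \<Rightarrow> cmat) \<Rightarrow> (cmat \<Rightarrow> cmat) \<Rightarrow> bool" where
  "kraus_channel d m K T \<longleftrightarrow> kraus d m K \<and>
     (\<forall>\<rho>\<in>carrier_mat d d. T \<rho> = msum d m (\<lambda>a. K a * \<rho> * madj (K a)))"

definition kraus_rep :: "nat \<Rightarrow> (cmat \<Rightarrow> cmat) \<Rightarrow> nat \<times> (nat \<Rightarrow> cmat)" where
  "kraus_rep d T = (SOME mK. kraus_channel d (fst mK) (snd mK) T)"

lemma cptp_kraus_rep:
  assumes "cptp d T"
  shows "kraus_channel d (fst (kraus_rep d T)) (snd (kraus_rep d T)) T"
proof -
  obtain m K where "kraus_channel d m K T"
    using assms by (auto simp: cptp_def kraus_channel_def kraus_def)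
  then have "\<exists>mK. kraus_channel d (fst mK) (snd mK) T" by (intro exI[of _ "(m, K)"]) simp
  then show ?thesis unfolding kraus_rep_def by (rule someI_ex)
qed

definition channel_ens :: "nat \<Rightarrow> (cmat \<Rightarrow> cmat) \<Rightarrow> (nat \<Rightarrow> complex) list \<Rightarrow> (nat \<Rightarrow> complex) list" where
  "channel_ens d T = kraus_ens d (fst (kraus_rep d T)) (snd (kraus_rep d T))"

definition channel_pairs :: "nat \<Rightarrow> (cmat \<Rightarrow> cmat) \<Rightarrow> coupling \<Rightarrow> coupling" where
  "channel_pairs d T = kraus_pairs d (fst (kraus_rep d T)) (snd (kraus_rep d T))"

lemma ensemble_mat_channel_ens:
  "cptp d T \<Longrightarrow> T (ensemble_mat d L) = ensemble_mat d (channel_ens d T L)"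
  using cptp_kraus_rep[of d T] by (simp add: kraus_channel_def channel_ens_def ensemble_mat_kraus_ens)

lemma sum_sqnorm_channel_ens:
  "cptp d T \<Longrightarrow> (\<Sum>u\<leftarrow>channel_ens d T L. sqnorm d u) = (\<Sum>u\<leftarrow>L. sqnorm d u)"
  using cptp_kraus_rep[of d T] by (simp add: kraus_channel_def channel_ens_def sum_sqnorm_kraus_ens)

lemma pair_dist_channel_pairs: "cptp d T \<Longrightarrow> pair_dist d (channel_pairs d T P) = pair_dist d P"
  using cptp_kraus_rep[of d T] by (simp add: kraus_channel_def channel_pairs_def pair_dist_kraus_pairs)

lemma map_fst_channel_pairs: "map fst (channel_pairs d T P) = channel_ens d T (map fst P)"
  by (simp add: channel_pairs_def channel_ens_def map_fst_kraus_pairs)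

lemma map_snd_channel_pairs: "map snd (channel_pairs d T P) = channel_ens d T (map snd P)"
  by (simp add: channel_pairs_def channel_ens_def map_snd_kraus_pairs)

text \<open>\<open>coupled x i\<close> follows the state after \<open>i\<close> queries to the marked item \<open>x\<close>, paired with
  \<open>free_ens i\<close>, the same evolution with all queries omitted.\<close>
locale noisy_round =
  fixes p :: real and n M :: nat and R :: round
  assumes p_pos: "0 < p" and p_lt_1: "p < 1" and dim_pos: "0 < n * M"
    and valid: "valid_round n M R"
begin

definition init_ens :: "(nat \<Rightarrow> complex) list" where
  "init_ens = (SOME L. ensemble_mat (n * M) L = rinit R)"

fun coupled :: "nat \<Rightarrow> nat \<Rightarrow> coupling" where
  "coupled x 0 = map (\<lambda>v. (v, v)) init_ens"
| "coupled x (Suc i) = channel_pairs (n * M) (rT' R (Suc i))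
     (flip_pairs M x (channel_pairs (n * M) (rT R (Suc i)) (depol_pairs p (n * M) (coupled x i))))"

fun free_ens :: "nat \<Rightarrow> (nat \<Rightarrow> complex) list" where
  "free_ens 0 = init_ens"
| "free_ens (Suc i) = channel_ens (n * M) (rT' R (Suc i))
     (channel_ens (n * M) (rT R (Suc i)) (depol_ens p (n * M) (free_ens i)))"

definition total_dist :: "nat \<Rightarrow> real" where
  "total_dist i = (\<Sum>x<n. pair_dist (n * M) (coupled x i))"

lemma cptp_channels: "1 \<le> i \<Longrightarrow> i \<le> rk R \<Longrightarrow> cptp (n * M) (rT R i) \<and> cptp (n * M) (rT' R i)"
  using valid by (simp add: valid_round_def)

lemma ensemble_mat_init_ens: "ensemble_mat (n * M) init_ens = rinit R"
  using density_ensemble_mat[of "n * M" "rinit R"] valid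
  unfolding init_ens_def valid_round_def by (metis (mono_tags) someI_ex)

lemma sum_sqnorm_init_ens: "(\<Sum>u\<leftarrow>init_ens. sqnorm (n * M) u) = 1"
proof -
  have "mtr (rinit R) = 1" using valid by (simp add: valid_round_def density_def)
  then have "complex_of_real (\<Sum>u\<leftarrow>init_ens. sqnorm (n * M) u) = 1"
    using mtr_ensemble_mat[of "n * M" init_ens] by (simp add: ensemble_mat_init_ens)
  then show ?thesis by (metis of_real_eq_1_iff)
qed

lemma map_snd_coupled: "map snd (coupled x i) = free_ens i"
  by (induct i) (simp_all add: map_snd_channel_pairs map_snd_flip_pairs map_snd_depol_pairs o_def)

lemma sum_sqnorm_free_ens: "i \<le> rk R \<Longrightarrow> (\<Sum>u\<leftarrow>free_ens i. sqnorm (n * M) u) = 1"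
proof (induct i)
  case 0
  then show ?case by (simp add: sum_sqnorm_init_ens)
next
  case (Suc i)
  then show ?case using p_pos p_lt_1 dim_pos cptp_channels[of "Suc i"]
    by (simp add: sum_sqnorm_channel_ens sum_sqnorm_depol_ens)
qed

lemma sum_sqnorm_coupled: "i \<le> rk R \<Longrightarrow> (\<Sum>u\<leftarrow>map fst (coupled x i). sqnorm (n * M) u) = 1"
proof (induct i)
  case 0
  then show ?case by (simp add: sum_sqnorm_init_ens o_def)
next
  case (Suc i)
  then show ?case using p_pos p_lt_1 dim_pos cptp_channels[of "Suc i"]
    by (simp add: map_fst_channel_pairs map_fst_flip_pairs map_fst_depol_pairs
        sum_sqnorm_channel_ens sum_sqnorm_depol_ens sqnorm_phase_flip o_def)
qed

lemma evolve_eq_ensemble_mat: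
  "i \<le> rk R \<Longrightarrow> evolve p n M R x i (rinit R) = ensemble_mat (n * M) (map fst (coupled x i))"
proof (induct i)
  case 0
  then show ?case by (simp add: ensemble_mat_init_ens o_def)
next
  case (Suc i)
  then have "mtr (ensemble_mat (n * M) (map fst (coupled x i))) = 1"
    using sum_sqnorm_coupled[of i x] by (simp add: mtr_ensemble_mat)
  then show ?case
    using Suc p_pos p_lt_1 cptp_channels[of "Suc i"]
    by (simp add: depol_ensemble_mat ensemble_mat_channel_ens query_op_ensemble_mat
        map_fst_channel_pairs map_fst_flip_pairs map_fst_depol_pairs)
qed

end

lemma le_one_plus_sqrt_sq:
  fixes S D :: real
  assumes S: "\<And>t. t > 0 \<Longrightarrow> S \<le> (1 + t) + (1 + 1 / t) * D" and D: "0 \<le> D"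
  shows "S \<le> (1 + sqrt D)\<^sup>2"
proof (cases "D = 0")
  case True
  have "S \<le> 1 + t" if "t > 0" for t using S[OF that] True by simp
  then have "S \<le> 1" by (rule field_le_epsilon)
  then show ?thesis using True by simp
next
  case False
  then have s: "sqrt D > 0" using D by simp
  have "(1 + sqrt D) + (1 + 1 / sqrt D) * D = (1 + sqrt D)\<^sup>2"
    using s D by (simp add: field_simps power2_eq_square real_sqrt_mult_self flip: real_sqrt_mult)
  then show ?thesis using S[OF s] by simp
qed

context noisy_round
begin

lemma total_dist_zero: "total_dist 0 = 0"
  by (simp add: total_dist_def pair_dist_def o_def sqnorm_def)

lemma total_dist_step:
  assumes i: "i < rk R" and t: "t > 0"
  shows "total_dist (Suc i) \<le> (1 + t) * (1 - p) * total_dist i + 4 * (1 + 1 / t)"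
proof -
  let ?S = "channel_ens (n * M) (rT R (Suc i)) (depol_ens p (n * M) (free_ens i))"
  have T: "cptp (n * M) (rT R (Suc i))" "cptp (n * M) (rT' R (Suc i))"
    using cptp_channels[of "Suc i"] i by auto
  have step: "pair_dist (n * M) (coupled x (Suc i))
      \<le> (1 + t) * (1 - p) * pair_dist (n * M) (coupled x i) + (1 + 1 / t) * 4 * (\<Sum>w\<leftarrow>?S. block_weight n M x w)"
    for x
  proof -
    let ?Q = "channel_pairs (n * M) (rT R (Suc i)) (depol_pairs p (n * M) (coupled x i))"
    have "pair_dist (n * M) (coupled x (Suc i)) = pair_dist (n * M) (flip_pairs M x ?Q)"
      using T by (simp add: pair_dist_channel_pairs)
    also have "\<dots> \<le> (1 + t) * pair_dist (n * M) ?Q + (1 + 1 / t) * 4 * (\<Sum>w\<leftarrow>map snd ?Q. block_weight n M x w)"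
      by (rule pair_dist_flip_pairs_le[OF t])
    also have "map snd ?Q = ?S"
      by (simp add: map_snd_channel_pairs map_snd_depol_pairs map_snd_coupled)
    also have "pair_dist (n * M) ?Q = (1 - p) * pair_dist (n * M) (coupled x i)"
      using T p_pos p_lt_1 by (simp add: pair_dist_channel_pairs pair_dist_depol_pairs)
    finally show ?thesis by (simp add: mult.assoc)
  qed
  have "total_dist (Suc i)
      \<le> (\<Sum>x<n. (1 + t) * (1 - p) * pair_dist (n * M) (coupled x i) + (1 + 1 / t) * 4 * (\<Sum>w\<leftarrow>?S. block_weight n M x w))"
    unfolding total_dist_def by (intro sum_mono step)
  also have "\<dots> = (1 + t) * (1 - p) * total_dist i + (1 + 1 / t) * 4 * (\<Sum>w\<leftarrow>?S. \<Sum>x<n. block_weight n M x w)"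
    by (simp add: total_dist_def sum.distrib sum_distrib_left sum_list_sum_swap)
  also have "(\<Sum>w\<leftarrow>?S. \<Sum>x<n. block_weight n M x w) = 1"
    using T p_pos p_lt_1 dim_pos i sum_sqnorm_free_ens[of i]
    by (simp add: sum_block_weight sum_sqnorm_channel_ens sum_sqnorm_depol_ens)
  finally show ?thesis by (simp add: mult.commute)
qed

text \<open>The choice \<open>t = p / (1 - p)\<close> makes the contraction factor exactly \<open>1\<close>.\<close>
lemma total_dist_le_linear: "i \<le> rk R \<Longrightarrow> total_dist i \<le> 4 * i / p"
proof (induct i)
  case 0
  then show ?case by (simp add: total_dist_zero)
next
  case (Suc i)
  let ?t = "p / (1 - p)"
  have "(1 + ?t) * (1 - p) = 1" "4 * (1 + 1 / ?t) = 4 / p"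
    using p_pos p_lt_1 by (simp_all add: field_simps)
  then have "total_dist (Suc i) \<le> total_dist i + 4 / p"
    using total_dist_step[of i ?t] Suc p_pos p_lt_1 by simp
  also have "\<dots> \<le> 4 * real (Suc i) / p" using Suc p_pos by (simp add: field_simps)
  finally show ?case .
qed

text \<open>With \<open>t = p / (2 (1 - p))\<close> the distance contracts by \<open>1 - p/2\<close> per query, whose fixed point
  is \<open>16/p\<^sup>2\<close>.\<close>
lemma total_dist_le_saturated: "i \<le> rk R \<Longrightarrow> total_dist i \<le> 16 / p\<^sup>2"
proof (induct i)
  case 0
  then show ?case by (simp add: total_dist_zero)
next
  case (Suc i)
  let ?t = "p / (2 * (1 - p))"
  have "(1 + ?t) * (1 - p) = 1 - p / 2" "4 * (1 + 1 / ?t) \<le> 8 / p"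
    using p_pos p_lt_1 by (simp_all add: field_simps)
  then have "total_dist (Suc i) \<le> (1 - p / 2) * total_dist i + 8 / p"
    using total_dist_step[of i ?t] Suc p_pos p_lt_1 by simp
  also have "\<dots> \<le> (1 - p / 2) * (16 / p\<^sup>2) + 8 / p"
    using Suc p_lt_1 by (intro add_right_mono mult_left_mono) auto
  also have "\<dots> = 16 / p\<^sup>2" using p_pos by (simp add: field_simps power2_eq_square)
  finally show ?case .
qed

lemma success_le_coupled:
  assumes E: "povm (n * M) n E" and x: "x < n" and t: "t > 0"
  shows "Re (mtr (E x * round_state p n M R x))
    \<le> (1 + t) * (\<Sum>w\<leftarrow>free_ens (rk R). Re (sesq (n * M) (E x) w w))
       + (1 + 1 / t) * pair_dist (n * M) (coupled x (rk R))"
proof -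
  let ?P = "coupled x (rk R)"
  have Ex: "psd (n * M) (E x)" using E x by (simp add: povm_def)
  then have "E x \<in> carrier_mat (n * M) (n * M)" by (simp add: psd_def)
  then have "Re (mtr (E x * round_state p n M R x)) = (\<Sum>q\<leftarrow>?P. Re (sesq (n * M) (E x) (fst q) (fst q)))"
    by (simp add: round_state_def evolve_eq_ensemble_mat mtr_mult_ensemble_mat Re_sum_list o_def)
  also have "\<dots> \<le> (\<Sum>q\<leftarrow>?P. (1 + t) * Re (sesq (n * M) (E x) (snd q) (snd q))
      + (1 + 1 / t) * sqnorm (n * M) (\<lambda>i. fst q i - snd q i))"
  proof (rule sum_list_mono)
    fix q :: "(nat \<Rightarrow> complex) \<times> (nat \<Rightarrow> complex)"
    let ?\<delta> = "\<lambda>i. fst q i - snd q i"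
    have "fst q = (\<lambda>i. snd q i + ?\<delta> i)" by auto
    then have "Re (sesq (n * M) (E x) (fst q) (fst q))
        \<le> (1 + t) * Re (sesq (n * M) (E x) (snd q) (snd q)) + (1 + 1 / t) * Re (sesq (n * M) (E x) ?\<delta> ?\<delta>)"
      using psd_sesq_sum_le[OF Ex t] by metis
    also have "\<dots> \<le> (1 + t) * Re (sesq (n * M) (E x) (snd q) (snd q)) + (1 + 1 / t) * sqnorm (n * M) ?\<delta>"
      using povm_sesq_le[OF E x] t by (intro add_mono mult_left_mono) auto
    finally show "Re (sesq (n * M) (E x) (fst q) (fst q))
        \<le> (1 + t) * Re (sesq (n * M) (E x) (snd q) (snd q)) + (1 + 1 / t) * sqnorm (n * M) ?\<delta>" .
  qed
  also have "\<dots> = (1 + t) * (\<Sum>w\<leftarrow>map snd ?P. Re (sesq (n * M) (E x) w w)) + (1 + 1 / t) * pair_dist (n * M) ?P"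
    by (simp add: sum_list_addf sum_list_const_mult pair_dist_def o_def)
  finally show ?thesis by (simp add: map_snd_coupled)
qed

text \<open>Summed over the marked item, the oracle-free branches contribute at most one success,
  since the POVM sums to the identity on a normalised ensemble.\<close>
lemma success_le_total_dist:
  assumes E: "povm (n * M) n E" and t: "t > 0"
  shows "(\<Sum>x<n. Re (mtr (E x * round_state p n M R x))) \<le> (1 + t) + (1 + 1 / t) * total_dist (rk R)"
proof -
  have "(\<Sum>x<n. Re (mtr (E x * round_state p n M R x)))
      \<le> (1 + t) * (\<Sum>w\<leftarrow>free_ens (rk R). \<Sum>x<n. Re (sesq (n * M) (E x) w w)) + (1 + 1 / t) * total_dist (rk R)"
    by (rule order_trans[OF sum_mono[OF success_le_coupled[OF E _ t]]])
      (simp_all add: total_dist_def sum.distrib sum_distrib_left sum_list_sum_swap)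
  also have "(\<Sum>w\<leftarrow>free_ens (rk R). \<Sum>x<n. Re (sesq (n * M) (E x) w w)) = 1"
    using sum_sqnorm_free_ens[of "rk R"] by (simp add: povm_sum_sesq[OF E])
  finally show ?thesis by simp
qed

lemma success_le_sqrt_total_dist:
  "povm (n * M) n E \<Longrightarrow> (\<Sum>x<n. Re (mtr (E x * round_state p n M R x))) \<le> (1 + sqrt (total_dist (rk R)))\<^sup>2"
  by (rule le_one_plus_sqrt_sq[OF success_le_total_dist])
    (simp_all add: total_dist_def pair_dist_nonneg sum_nonneg)

end

lemma one_plus_sqrt_sq_le:
  fixes D X :: real
  assumes "0 \<le> D" "D \<le> X" "X = 0 \<or> 4 \<le> X"
  shows "(1 + sqrt D)\<^sup>2 \<le> 1 + 2 * X"
proof -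
  have "(1 + sqrt D)\<^sup>2 \<le> (1 + sqrt X)\<^sup>2"
    using assms by (intro power_mono add_left_mono real_sqrt_le_mono) auto
  also have "\<dots> = 1 + 2 * sqrt X + X"
    using assms by (simp add: power2_eq_square algebra_simps)
  also have "2 * sqrt X \<le> X"
  proof (cases "X = 0")
    case False
    then have "2 \<le> sqrt X" using assms real_sqrt_le_mono[of 4 X] by simp
    moreover have "0 \<le> X" using assms by linarith
    ultimately have "2 * sqrt X \<le> sqrt X * sqrt X" by (intro mult_right_mono) auto
    then show ?thesis using \<open>0 \<le> X\<close> by simp
  qed simp
  finally show ?thesis by simp
qed

lemma round_success_le:
  assumes p: "0 < p" "p < 1" and n: "0 < n" and M: "1 \<le> M" and R: "valid_round n M R"
  shows "round_success p n M R \<le> (1 + 8 * rk R / p) / n"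
    and "round_success p n M R \<le> (1 + 4 / p)\<^sup>2 / n"
proof -
  interpret noisy_round p n M R using assms by unfold_locales simp_all
  let ?S = "\<Sum>x<n. Re (mtr (rE R x * round_state p n M R x))"
  let ?D = "total_dist (rk R)"
  have D: "0 \<le> ?D" by (simp add: total_dist_def pair_dist_nonneg sum_nonneg)
  have S: "?S \<le> (1 + sqrt ?D)\<^sup>2"
    using R by (intro success_le_sqrt_total_dist) (simp add: valid_round_def)
  have "4 * real (rk R) / p = 0 \<or> 4 \<le> 4 * real (rk R) / p"
    using p by (cases "rk R") (simp_all add: field_simps)
  then have "(1 + sqrt ?D)\<^sup>2 \<le> 1 + 2 * (4 * real (rk R) / p)"
    using D total_dist_le_linear[of "rk R"] by (intro one_plus_sqrt_sq_le) auto
  then show "round_success p n M R \<le> (1 + 8 * rk R / p) / n"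
    using S n by (simp add: round_success_def divide_right_mono)
  have "sqrt ?D \<le> sqrt ((4 / p)\<^sup>2)"
    using total_dist_le_saturated[of "rk R"] by (simp add: power_divide)
  then have "(1 + sqrt ?D)\<^sup>2 \<le> (1 + 4 / p)\<^sup>2"
    using p D by (intro power_mono) auto
  then show "round_success p n M R \<le> (1 + 4 / p)\<^sup>2 / n"
    using S n by (simp add: round_success_def divide_right_mono)
qed

section \<open>Counting queries\<close>

lemma minus_ln_one_minus_le:
  fixes x xm :: real
  assumes "x \<le> xm" "xm < 1" "0 \<le> xm"
  shows "- ln (1 - x) \<le> max 0 x / (1 - xm)"
proof -
  have x1: "1 - x > 0" using assms by simp
  have "- ln (1 - x) \<le> 1 / (1 - x) - 1"
    using x1 ln_le_minus_one[of "1 / (1 - x)"] by (simp add: ln_div)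
  also have "\<dots> = x / (1 - x)" using x1 by (simp add: field_simps)
  also have "\<dots> \<le> max 0 x / (1 - xm)"
  proof (cases "x \<le> 0")
    case True
    then show ?thesis using x1 assms by (simp add: divide_nonpos_pos)
  next
    case False
    then show ?thesis using assms x1 by (simp add: divide_left_mono)
  qed
  finally show ?thesis .
qed

lemma ln_inverse_le_sum:
  fixes s :: "nat \<Rightarrow> real"
  assumes F: "(\<Prod>g\<in>G. 1 - s g) \<le> \<epsilon>" and \<epsilon>: "0 < \<epsilon>" and G: "finite G"
    and s: "\<And>g. g \<in> G \<Longrightarrow> s g \<le> xm" and xm: "0 \<le> xm" "xm < 1"
  shows "ln (1 / \<epsilon>) \<le> (\<Sum>g\<in>G. max 0 (s g)) / (1 - xm)"
proof -
  have pos: "0 < 1 - s g" if "g \<in> G" for g using s[OF that] xm by simp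
  have "(\<Sum>g\<in>G. ln (1 - s g)) = ln (\<Prod>g\<in>G. 1 - s g)"
    using pos G by (intro ln_prod[symmetric]) force+
  also have "\<dots> \<le> ln \<epsilon>" using F pos \<epsilon> by (intro ln_mono prod_pos) auto
  finally have "ln (1 / \<epsilon>) \<le> (\<Sum>g\<in>G. - ln (1 - s g))"
    using \<epsilon> by (simp add: ln_div sum_negf)
  also have "\<dots> \<le> (\<Sum>g\<in>G. max 0 (s g) / (1 - xm))"
    using s xm by (intro sum_mono minus_ln_one_minus_le) auto
  finally show ?thesis by (simp add: sum_divide_distrib)
qed

text \<open>For small \<open>N\<close>, where \<open>B (L + a) / (a N) \<ge> 1\<close>, the value \<open>N L / a\<close> is
  chosen so that the claimed bound degenerates to \<open>N / (1 + N) \<le> 1\<close>.\<close>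
definition overhead :: "real \<Rightarrow> real \<Rightarrow> real \<Rightarrow> nat \<Rightarrow> real" where
  "overhead a B L N = (if B * (L + a) / (a * N) < 1 then 1 / (1 - B * (L + a) / (a * N)) else N * L / a)"

lemma overhead_tendsto: "(\<lambda>N. overhead a B L N) \<longlonglongrightarrow> 1"
proof -
  have x: "(\<lambda>N. B * (L + a) / (a * real N)) \<longlonglongrightarrow> 0"
    using tendsto_mult[OF tendsto_const lim_inverse_n, of "B * (L + a) / a"]
    by (simp add: divide_inverse mult_ac)
  have "eventually (\<lambda>N. B * (L + a) / (a * real N) < 1) sequentially"
    using order_tendstoD(2)[OF x, of 1] by simp
  then have "eventually (\<lambda>N. overhead a B L N = 1 / (1 - B * (L + a) / (a * real N))) sequentially"
    by eventually_elim (simp add: overhead_def)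
  moreover have "(\<lambda>N. 1 / (1 - B * (L + a) / (a * real N))) \<longlonglongrightarrow> 1 / (1 - 0)"
    by (intro tendsto_intros x) simp
  ultimately show ?thesis by (simp add: tendsto_cong)
qed

lemma sum_max_le_queries:
  fixes s :: "nat \<Rightarrow> real" and k :: "nat \<Rightarrow> nat" and a D :: real
  assumes a: "1 \<le> a" and D: "0 < D" and room: "\<And>g. g \<le> r \<Longrightarrow> D \<le> real (N - g)"
    and lin: "\<And>g. g \<le> r \<Longrightarrow> s g \<le> (1 + a * k g) / real (N - g)"
  shows "(\<Sum>g\<le>r. max 0 (s g)) \<le> a * (\<Sum>g\<le>r. real (k g) + 1) / D"
proof -
  have "max 0 (s g) \<le> a * (real (k g) + 1) / D" if g: "g \<le> r" for g
  proof -
    have "s g \<le> (1 + a * k g) / D"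
      using lin[OF g] room[OF g] D a by (smt (verit) frac_le mult_nonneg_nonneg of_nat_0_le_iff)
    also have "\<dots> \<le> a * (real (k g) + 1) / D" using a D by (intro divide_right_mono) (auto simp: algebra_simps)
    finally show ?thesis using a D by simp
  qed
  then have "(\<Sum>g\<le>r. max 0 (s g)) \<le> (\<Sum>g\<le>r. a * (real (k g) + 1) / D)" by (intro sum_mono) auto
  then show ?thesis by (simp add: sum_divide_distrib sum_distrib_left)
qed

lemma ln_inverse_le_queries:
  fixes s :: "nat \<Rightarrow> real" and k :: "nat \<Rightarrow> nat" and r N :: nat and a B \<epsilon> L q xm :: real
  defines "L \<equiv> ln (1 / \<epsilon>)" and "q \<equiv> \<Sum>g\<le>r. real (k g) + 1" and "xm \<equiv> B * (L + a) / (a * real N)"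
  assumes r: "r < N" and a: "1 \<le> a" and B: "0 < B" and \<epsilon>: "0 < \<epsilon>" "\<epsilon> < 1"
    and F: "(\<Prod>g\<le>r. 1 - s g) \<le> \<epsilon>"
    and lin: "\<And>g. g \<le> r \<Longrightarrow> s g \<le> (1 + a * k g) / real (N - g)"
    and sat: "\<And>g. g \<le> r \<Longrightarrow> s g \<le> B / real (N - g)"
    and xm: "xm < 1" and few: "real N * a / (L + a) < real N - q"
  shows "L * (real N - q) \<le> a * q / (1 - xm)"
proof -
  let ?D = "N * a / (L + a)"
  have L: "0 < L" using \<epsilon> by (simp add: L_def)
  have "(\<Sum>g\<le>r. (1::real)) \<le> q" unfolding q_def by (intro sum_mono) auto
  then have room: "N - q \<le> real (N - g)" if "g \<le> r" for g using that r by (simp add: of_nat_diff)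
  have D: "0 < ?D" using L a r by simp
  have "s g \<le> xm" if g: "g \<le> r" for g
  proof -
    have "?D \<le> real (N - g)" using room[OF g] few by linarith
    then have "B / real (N - g) \<le> B / ?D" using D B by (intro frac_le) auto
    then have "s g \<le> B / ?D" by (rule order_trans[OF sat[OF g]])
    then show ?thesis using L a by (simp add: xm_def field_simps)
  qed
  moreover have "0 \<le> xm" using B L a by (simp add: xm_def)
  ultimately have "L \<le> (\<Sum>g\<le>r. max 0 (s g)) / (1 - xm)"
    using ln_inverse_le_sum[OF F \<epsilon>(1)] xm by (simp add: L_def)
  also have "\<dots> \<le> a * q / (N - q) / (1 - xm)"
    using xm D few sum_max_le_queries[where D = "real N - q", OF a _ room lin]
    by (intro divide_right_mono) (auto simp: q_def)
  finally have "L \<le> a * q / (N - q) / (1 - xm)" .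
  moreover have Nq: "0 < real N - q" using D few by linarith
  ultimately have "L * (N - q) \<le> a * q / (N - q) / (1 - xm) * (N - q)"
    by (intro mult_right_mono) auto
  also have "\<dots> = a * q / (1 - xm)" using Nq by simp
  finally show ?thesis .
qed

lemma queries_lower_bound:
  fixes s :: "nat \<Rightarrow> real" and k :: "nat \<Rightarrow> nat" and a B :: real
  assumes r: "r < N" and a: "1 \<le> a" and B: "0 < B" and \<epsilon>: "0 < \<epsilon>" "\<epsilon> < 1"
    and F: "(\<Prod>g\<le>r. 1 - s g) \<le> \<epsilon>"
    and lin: "\<And>g. g \<le> r \<Longrightarrow> s g \<le> (1 + a * k g) / real (N - g)"
    and sat: "\<And>g. g \<le> r \<Longrightarrow> s g \<le> B / real (N - g)"
  shows "N / (1 + a * overhead a B (ln (1 / \<epsilon>)) N / ln (1 / \<epsilon>)) \<le> (\<Sum>g\<le>r. real (k g) + 1)"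
proof -
  define L where "L = ln (1 / \<epsilon>)"
  define q where "q = (\<Sum>g\<le>r. real (k g) + 1)"
  define xm where "xm = B * (L + a) / (a * N)"
  define C where "C = overhead a B L N"
  have L: "0 < L" using \<epsilon> by (simp add: L_def)
  have "(\<Sum>g\<le>r. (1::real)) \<le> q" unfolding q_def by (intro sum_mono) auto
  then have q: "1 \<le> q" by simp
  show ?thesis
  proof (cases "xm < 1")
    case False
    then have "N / (1 + a * C / L) = N / (1 + N)" using a L by (simp add: C_def overhead_def xm_def)
    also have "\<dots> \<le> 1" by simp
    also have "\<dots> \<le> q" by (rule q)
    finally show ?thesis by (simp add: C_def L_def q_def)
  next
    case True
    have "0 < xm" using B L a r by (simp add: xm_def)
    then have C: "C = 1 / (1 - xm)" "1 \<le> C" using True by (simp_all add: C_def overhead_def xm_def)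
    have pos: "0 < L + a * C" using L a C(2) by (smt (verit) mult_le_cancel_left1)
    have "N * L \<le> q * (L + a * C)"
    proof (cases "N * L / (L + a) \<le> q")
      case True
      have "N * L \<le> q * (L + a)" using True L a by (simp add: field_simps)
      also have "\<dots> \<le> q * (L + a * C)"
        using q a C(2) by (intro mult_left_mono add_left_mono) (auto simp: mult_le_cancel_left1)
      finally show ?thesis .
    next
      case False
      then have "N * a / (L + a) < N - q" using L a by (simp add: field_simps)
      then have "L * (N - q) \<le> a * q / (1 - xm)"
        unfolding L_def q_def xm_def using assms True
        by (intro ln_inverse_le_queries) (simp_all add: L_def q_def xm_def)
      then show ?thesis using C(1) by (simp add: algebra_simps)
    qed
    then have "N * L / (L + a * C) \<le> q" using pos by (simp add: pos_divide_le_eq mult.commute)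
    then show ?thesis using L pos by (simp add: C_def L_def q_def field_simps)
  qed
qed

theorem theorem5:
  fixes p \<epsilon> :: real
  assumes "0 < p" "p < 1" "0 < \<epsilon>" "\<epsilon> < 1"
  shows "\<exists>C :: nat \<Rightarrow> real. C \<longlonglongrightarrow> 1 \<and>
    (\<forall>N A. valid_alg N A \<and> failure_prob p N A \<le> \<epsilon> \<longrightarrow>
       real N / (1 + 8 * C N / (p * ln (1 / \<epsilon>))) \<le> real (queries A))"
proof (intro exI conjI allI impI)
  let ?a = "8 / p" and ?B = "(1 + 4 / p)\<^sup>2"
  show "overhead ?a ?B (ln (1 / \<epsilon>)) \<longlonglongrightarrow> 1" by (rule overhead_tendsto)
  have "0 < 1 + 4 / p" using assms(1) by (simp add: add_pos_pos)
  then have B: "0 < ?B" by simp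
  fix N A
  assume A: "valid_alg N A \<and> failure_prob p N A \<le> \<epsilon>"
  let ?s = "\<lambda>g. round_success p (N - g) (aM A) (around A g)"
  have "real N / (1 + ?a * overhead ?a ?B (ln (1 / \<epsilon>)) N / ln (1 / \<epsilon>))
      \<le> (\<Sum>g\<le>arounds A. real (rk (around A g)) + 1)"
  proof (rule queries_lower_bound[where s = ?s and k = "\<lambda>g. rk (around A g)"])
    fix g assume "g \<le> arounds A"
    then have "0 < N - g" "1 \<le> aM A" "valid_round (N - g) (aM A) (around A g)"
      using A by (auto simp: valid_alg_def)
    from round_success_le[OF assms(1,2) this]
    show "?s g \<le> (1 + ?a * rk (around A g)) / real (N - g)" "?s g \<le> ?B / real (N - g)"
      by simp_all
  qed (use A assms B in \<open>auto simp: valid_alg_def failure_prob_def\<close>)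
  then show "real N / (1 + 8 * overhead ?a ?B (ln (1 / \<epsilon>)) N / (p * ln (1 / \<epsilon>))) \<le> real (queries A)"
    by (simp add: queries_def add.commute)
qed

end
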